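(* Let $k_1,k_2,k_3$ be real constants and use polar coordinates $x=r\cos\theta$, $y=r\sin\theta$ ($r>0$). For the potential $$V=\frac{k_1}{r^2}+\frac{k_2e^{\sqrt3\theta}+k_3e^{-\sqrt3\theta}}{r^3},$$ the function $$J=p_\theta^3+\frac34\Big[2k_1+\frac3r\big(k_2e^{\sqrt3\theta}+k_3e^{-\sqrt3\theta}\big)\Big]p_\theta+\frac{3\sqrt3}{4}\big(k_2e^{\sqrt3\theta}-k_3e^{-\sqrt3\theta}\big)p_r$$ is a first integral of $\ddot x=-V_{,x}$, $\ddot y=-V_{,y}$, where $p_r=\dot r$ and $p_\theta=x\dot y-y\dot x=r^2\dot\theta$.
   Context: A first integral is a function of $(t,x,y,\dot x,\dot y)$ whose total time derivative vanishes along every solution of the given equations of motion. *)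

theory Defs
  imports "HOL-Analysis.Analysis"
begin

definition rad :: "real \<Rightarrow> real \<Rightarrow> real" where
  "rad x y = sqrt (x^2 + y^2)"

definition angle_branch :: "(real \<times> real) set \<Rightarrow> (real \<times> real \<Rightarrow> real) \<Rightarrow> bool" where
  "angle_branch U th \<longleftrightarrow> open U \<and> (0,0) \<notin> U \<and> continuous_on U th \<and>
     (\<forall>(a,b)\<in>U. a = rad a b * cos (th (a,b)) \<and> b = rad a b * sin (th (a,b)))"

definition Vpot :: "real \<Rightarrow> real \<Rightarrow> real \<Rightarrow> (real \<times> real \<Rightarrow> real) \<Rightarrow> real \<times> real \<Rightarrow> real" where
  "Vpot k1 k2 k3 th = (\<lambda>(x,y). k1 / (rad x y)^2
      + (k2 * exp (sqrt 3 * th (x,y)) + k3 * exp (- (sqrt 3 * th (x,y)))) / (rad x y)^3)"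

definition Jint :: "real \<Rightarrow> real \<Rightarrow> real \<Rightarrow> (real \<times> real \<Rightarrow> real)
     \<Rightarrow> real \<Rightarrow> real \<Rightarrow> real \<Rightarrow> real \<Rightarrow> real" where
  "Jint k1 k2 k3 th x y vx vy =
     (let r = rad x y; pth = x * vy - y * vx; pr = (x * vx + y * vy) / r;
          E2 = k2 * exp (sqrt 3 * th (x,y)); E3 = k3 * exp (- (sqrt 3 * th (x,y)))
      in pth ^ 3 + 3/4 * (2 * k1 + 3 / r * (E2 + E3)) * pth
         + 3 * sqrt 3 / 4 * (E2 - E3) * pr)"

end

theory Submission
  imports Defs
begin

text \<open>
  In polar coordinates the motion obeys \<open>r' = p\<^sub>r\<close>, \<open>\<theta>' = p\<^sub>\<theta> / r\<^sup>2\<close>,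
  \<open>p\<^sub>\<theta>' = - V\<^sub>\<theta>\<close> and \<open>p\<^sub>r' = p\<^sub>\<theta>\<^sup>2 / r\<^sup>3 - V\<^sub>r\<close>, and along these equations the
  derivative of \<open>J\<close> cancels identically. The work lies in deriving the polar equations for a
  Cartesian solution: the angle branch is only assumed continuous, but near each point it equals
  a constant plus \<open>arcsin\<close> of a smooth function of the position, so it is differentiable with
  gradient \<open>(-y, x) / r\<^sup>2\<close>; comparing the resulting derivative of \<open>V\<close> with the one prescribed
  by Newton's law gives the torque \<open>x y'' - y x''\<close> and the radial force \<open>x x'' + y y''\<close>.
\<close>

lemma rad_pos: "(a, b) \<noteq> (0, 0) \<Longrightarrow> rad a b > 0"
  unfolding rad_def by (simp add: sum_power2_gt_zero_iff)

lemma rad_squared: "(rad a b)\<^sup>2 = a\<^sup>2 + b\<^sup>2"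
  unfolding rad_def by simp

lemma rad_has_derivative:
  assumes "(a, b) \<noteq> (0, 0)"
  shows "((\<lambda>q. rad (fst q) (snd q)) has_derivative (\<lambda>(h1, h2). (a * h1 + b * h2) / rad a b))
           (at (a, b))"
proof -
  have "sqrt (a\<^sup>2 + b\<^sup>2) \<noteq> 0" using rad_pos[OF assms] unfolding rad_def by linarith
  then show ?thesis
    unfolding rad_def
    by (auto intro!: derivative_eq_intros simp: fun_eq_iff split_beta field_simps sum_power2_gt_zero_iff)
qed

lemma angle_branch_local_arcsin:
  assumes ab: "angle_branch U th" and p: "p \<in> U"
  shows "\<forall>\<^sub>F (c, d) in nhds p.
           th (c, d) = th p + arcsin ((d * cos (th p) - c * sin (th p)) / rad c d)"
proof -
  define \<alpha> where "\<alpha> = th p"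
  from ab have oU: "open U" and nz: "(0, 0) \<notin> U" and cth: "continuous_on U th"
    and polar: "\<And>c d. (c, d) \<in> U \<Longrightarrow> c = rad c d * cos (th (c, d)) \<and> d = rad c d * sin (th (c, d))"
    unfolding angle_branch_def by auto
  have lim: "(th \<longlongrightarrow> \<alpha>) (nhds p)"
    using cth oU p unfolding \<alpha>_def
    by (simp add: continuous_on_eq_continuous_at isCont_def tendsto_at_iff_tendsto_nhds)
  have "\<forall>\<^sub>F q in nhds p. q \<in> U \<and> \<alpha> - pi/2 < th q \<and> th q < \<alpha> + pi/2"
    using eventually_nhds_in_open[OF oU p] order_tendstoD[OF lim, of "\<alpha> - pi/2"]
      order_tendstoD[OF lim, of "\<alpha> + pi/2"] by (simp add: eventually_conj_iff)
  then show ?thesis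
    unfolding \<alpha>_def[symmetric]
  proof (rule eventually_mono, clarify)
    fix c d assume cd: "(c, d) \<in> U" and near: "\<alpha> - pi/2 < th (c, d)" "th (c, d) < \<alpha> + pi/2"
    have "rad c d > 0" using cd nz rad_pos by metis
    moreover have "d * cos \<alpha> - c * sin \<alpha> = rad c d * sin (th (c, d) - \<alpha>)"
      using polar[OF cd] by (metis mult.assoc right_diff_distrib sin_diff)
    ultimately have "(d * cos \<alpha> - c * sin \<alpha>) / rad c d = sin (th (c, d) - \<alpha>)"
      by simp
    then show "th (c, d) = \<alpha> + arcsin ((d * cos \<alpha> - c * sin \<alpha>) / rad c d)"
      using near by (simp add: arcsin_sin)
  qed
qed

lemma angle_branch_has_derivative:
  assumes ab: "angle_branch U th" and p: "(a, b) \<in> U"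
  shows "(th has_derivative (\<lambda>(h1, h2). (a * h2 - b * h1) / (rad a b)\<^sup>2)) (at (a, b))"
proof -
  define \<alpha> where "\<alpha> = th (a, b)"
  define R where "R = rad a b"
  define v where "v q = (snd q * cos \<alpha> - fst q * sin \<alpha>) / rad (fst q) (snd q)" for q
  have nz: "(a, b) \<noteq> (0, 0)" using ab p unfolding angle_branch_def by auto
  have R: "R > 0" using rad_pos[OF nz] unfolding R_def .
  have polar: "a = R * cos \<alpha>" "b = R * sin \<alpha>"
    using ab p unfolding angle_branch_def \<alpha>_def R_def by auto
  then have v0: "v (a, b) = 0"
    unfolding v_def by (simp add: algebra_simps)
  have "(v has_derivative (\<lambda>(h1, h2). (h2 * cos \<alpha> - h1 * sin \<alpha>) / R)) (at (a, b))"
    unfolding v_def R_def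
    by (rule derivative_eq_intros rad_has_derivative[OF nz] refl
        | use R v0 in \<open>simp add: fun_eq_iff split_beta R_def v_def\<close>)+
  then have "((\<lambda>q. \<alpha> + arcsin (v q)) has_derivative (\<lambda>(h1, h2). (h2 * cos \<alpha> - h1 * sin \<alpha>) / R))
               (at (a, b))"
    by (auto intro!: derivative_eq_intros simp: v0)
  also have "(\<lambda>(h1, h2). (h2 * cos \<alpha> - h1 * sin \<alpha>) / R) = (\<lambda>(h1, h2). (a * h2 - b * h1) / (rad a b)\<^sup>2)"
    unfolding R_def[symmetric] using R by (simp add: polar fun_eq_iff power2_eq_square field_simps)
  finally have arcsin_form:
    "((\<lambda>q. \<alpha> + arcsin (v q)) has_derivative (\<lambda>(h1, h2). (a * h2 - b * h1) / (rad a b)\<^sup>2)) (at (a, b))" .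
  have "\<forall>\<^sub>F q in nhds (a, b). \<alpha> + arcsin (v q) = th q"
    using angle_branch_local_arcsin[OF ab p] unfolding v_def \<alpha>_def
    by (rule eventually_mono) (auto split: prod.splits)
  with arcsin_form show ?thesis
    using v0 \<alpha>_def by (auto intro: has_derivative_transform_eventually simp: eventually_nhds_conv_at)
qed

lemma has_derivative_along_curve:
  assumes f: "(f has_derivative D) (at (x t, y t))"
    and x: "(x has_real_derivative x') (at t)" and y: "(y has_real_derivative y') (at t)"
  shows "((\<lambda>s. f (x s, y s)) has_real_derivative D (x', y')) (at t)"
proof -
  have "((\<lambda>s. (x s, y s)) has_derivative (\<lambda>h. h *\<^sub>R (x', y'))) (at t)"
    using has_derivative_Pair[OF x[unfolded has_field_derivative_def] y[unfolded has_field_derivative_def]]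
    by (simp add: mult.commute)
  from has_derivative_compose[OF this f]
  have "((\<lambda>s. f (x s, y s)) has_derivative (\<lambda>h. D (h *\<^sub>R (x', y')))) (at t)" .
  then show ?thesis
    unfolding has_field_derivative_def linear.scaleR[OF has_derivative_linear[OF f]]
    by (rule has_derivative_eq_rhs) (simp_all add: fun_eq_iff)
qed

lemma rad_along_curve_has_derivative:
  assumes nz: "(x t, y t) \<noteq> (0, 0)"
    and x: "(x has_real_derivative x') (at t)" and y: "(y has_real_derivative y') (at t)"
  shows "((\<lambda>s. rad (x s) (y s)) has_real_derivative (x t * x' + y t * y') / rad (x t) (y t)) (at t)"
  using has_derivative_along_curve[OF rad_has_derivative[OF nz] x y] by simp

lemma radial_momentum_has_derivative:
  assumes nz: "(x t, y t) \<noteq> (0, 0)"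
    and x: "(x has_real_derivative x' t) (at t)" and y: "(y has_real_derivative y' t) (at t)"
    and x': "(x' has_real_derivative x'' t) (at t)" and y': "(y' has_real_derivative y'' t) (at t)"
  defines "r \<equiv> rad (x t) (y t)"
  shows "((\<lambda>s. (x s * x' s + y s * y' s) / rad (x s) (y s)) has_real_derivative
           ((x t * y' t - y t * x' t)\<^sup>2 / r\<^sup>2 + x t * x'' t + y t * y'' t) / r) (at t)"
proof -
  define N where "N = x t * x' t + y t * y' t"
  have r: "r > 0" and r2: "r\<^sup>2 = (x t)\<^sup>2 + (y t)\<^sup>2"
    using rad_pos[OF nz] rad_squared unfolding r_def by auto
  have lagrange: "r\<^sup>2 * ((x' t)\<^sup>2 + (y' t)\<^sup>2) = N\<^sup>2 + (x t * y' t - y t * x' t)\<^sup>2"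
    unfolding r2 N_def by algebra
  have "((\<lambda>s. x s * x' s + y s * y' s) has_real_derivative
          (x' t)\<^sup>2 + (y' t)\<^sup>2 + x t * x'' t + y t * y'' t) (at t)"
    by (rule derivative_eq_intros x y x' y' refl | simp add: power2_eq_square algebra_simps)+
  from DERIV_divide[OF this rad_along_curve_has_derivative[OF nz x y]]
  have "((\<lambda>s. (x s * x' s + y s * y' s) / rad (x s) (y s)) has_real_derivative
          (((x' t)\<^sup>2 + (y' t)\<^sup>2 + x t * x'' t + y t * y'' t) * r - N * (N / r)) / (r * r)) (at t)"
    using r unfolding r_def[symmetric] N_def[symmetric] by simp
  moreover have "(((x' t)\<^sup>2 + (y' t)\<^sup>2 + x t * x'' t + y t * y'' t) * r - N * (N / r)) / (r * r)
      = ((x t * y' t - y t * x' t)\<^sup>2 / r\<^sup>2 + x t * x'' t + y t * y'' t) / r"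
    using r by (simp add: field_simps) (use lagrange in algebra)
  ultimately show ?thesis by simp
qed

lemma Vpot_has_derivative:
  fixes k1 k2 k3 :: real
  assumes ab: "angle_branch U th" and p: "(a, b) \<in> U"
  defines "r \<equiv> rad a b"
    and "E \<equiv> k2 * exp (sqrt 3 * th (a, b)) + k3 * exp (- (sqrt 3 * th (a, b)))"
    and "F \<equiv> k2 * exp (sqrt 3 * th (a, b)) - k3 * exp (- (sqrt 3 * th (a, b)))"
  shows "(Vpot k1 k2 k3 th has_derivative
           (\<lambda>(h1, h2). - (2 * k1 + 3 * E / r) * (a * h1 + b * h2) / r ^ 4
                        + sqrt 3 * F * (a * h2 - b * h1) / r ^ 5)) (at (a, b))"
proof -
  have nz: "(a, b) \<noteq> (0, 0)" using ab p unfolding angle_branch_def by auto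
  have r: "rad a b \<noteq> 0" using rad_pos[OF nz] by simp
  have V: "Vpot k1 k2 k3 th = (\<lambda>q. k1 / (rad (fst q) (snd q))\<^sup>2
      + (k2 * exp (sqrt 3 * th q) + k3 * exp (- (sqrt 3 * th q))) / (rad (fst q) (snd q)) ^ 3)"
    unfolding Vpot_def by (simp add: fun_eq_iff)
  show ?thesis
    unfolding V
    apply (rule derivative_eq_intros rad_has_derivative[OF nz] angle_branch_has_derivative[OF ab p] refl
       | simp add: r)+
    unfolding E_def F_def r_def using r by (simp add: fun_eq_iff eval_nat_numeral field_simps)
qed

lemma Vpot_force_polar:
  fixes k1 k2 k3 :: real
  assumes ab: "angle_branch U th" and p: "(a, b) \<in> U"
    and D: "(Vpot k1 k2 k3 th has_derivative (\<lambda>(h1, h2). - (f1 * h1 + f2 * h2))) (at (a, b))"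
  defines "r \<equiv> rad a b"
    and "E \<equiv> k2 * exp (sqrt 3 * th (a, b)) + k3 * exp (- (sqrt 3 * th (a, b)))"
    and "F \<equiv> k2 * exp (sqrt 3 * th (a, b)) - k3 * exp (- (sqrt 3 * th (a, b)))"
  shows "a * f2 - b * f1 = - sqrt 3 * F / r ^ 3"
    and "a * f1 + b * f2 = (2 * k1 + 3 * E / r) / r ^ 2"
proof -
  have nz: "(a, b) \<noteq> (0, 0)" using ab p unfolding angle_branch_def by auto
  have r: "r > 0" and r2: "r\<^sup>2 = a\<^sup>2 + b\<^sup>2"
    using rad_pos[OF nz] rad_squared unfolding r_def by auto
  have grad: "- (f1 * h1 + f2 * h2) = - (2 * k1 + 3 * E / r) * (a * h1 + b * h2) / r ^ 4
                                      + sqrt 3 * F * (a * h2 - b * h1) / r ^ 5" for h1 h2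
    using has_derivative_unique[OF D Vpot_has_derivative[OF ab p]]
    unfolding r_def E_def F_def by (simp add: fun_eq_iff)
  have "a * f2 - b * f1 = - sqrt 3 * F * r\<^sup>2 / r ^ 5"
    using grad[of "- b" a] r unfolding r2 by (simp add: field_simps power2_eq_square)
  then show "a * f2 - b * f1 = - sqrt 3 * F / r ^ 3"
    using r by (simp add: eval_nat_numeral)
  have "a * f1 + b * f2 = (2 * k1 + 3 * E / r) * r\<^sup>2 / r ^ 4"
    using grad[of a b] r unfolding r2 by (simp add: field_simps power2_eq_square)
  then show "a * f1 + b * f2 = (2 * k1 + 3 * E / r) / r ^ 2"
    using r by (simp add: eval_nat_numeral)
qed

text \<open>The hypotheses are Hamilton's equations for \<open>V\<close> in polar coordinates:
  \<open>V\<^sub>\<theta> = \<surd>3 F / r\<^sup>3\<close> and \<open>V\<^sub>r = - (2 k\<^sub>1 + 3 E / r) / r\<^sup>3\<close>.\<close>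

lemma polar_first_integral:
  fixes k1 k2 k3 :: real and r \<theta> p\<^sub>\<theta> p\<^sub>r :: "real \<Rightarrow> real"
  defines "E \<equiv> \<lambda>s. k2 * exp (sqrt 3 * \<theta> s) + k3 * exp (- (sqrt 3 * \<theta> s))"
    and "F \<equiv> \<lambda>s. k2 * exp (sqrt 3 * \<theta> s) - k3 * exp (- (sqrt 3 * \<theta> s))"
  assumes r: "r t > 0"
    and dr: "(r has_real_derivative p\<^sub>r t) (at t)"
    and d\<theta>: "(\<theta> has_real_derivative p\<^sub>\<theta> t / (r t)\<^sup>2) (at t)"
    and dp\<theta>: "(p\<^sub>\<theta> has_real_derivative - sqrt 3 * F t / r t ^ 3) (at t)"
    and dpr: "(p\<^sub>r has_real_derivative (p\<^sub>\<theta> t ^ 2 + 2 * k1 + 3 * E t / r t) / r t ^ 3) (at t)"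
  shows "((\<lambda>s. p\<^sub>\<theta> s ^ 3 + 3/4 * (2 * k1 + 3 / r s * E s) * p\<^sub>\<theta> s + 3 * sqrt 3 / 4 * F s * p\<^sub>r s)
           has_real_derivative 0) (at t)"
proof -
  have s3: "sqrt 3 * sqrt 3 = (3::real)" by simp
  have dE: "(E has_real_derivative sqrt 3 * F t * (p\<^sub>\<theta> t / (r t)\<^sup>2)) (at t)"
    unfolding E_def F_def by (rule derivative_eq_intros d\<theta> refl)+ (simp add: algebra_simps)
  have dF: "(F has_real_derivative sqrt 3 * E t * (p\<^sub>\<theta> t / (r t)\<^sup>2)) (at t)"
    unfolding E_def F_def by (rule derivative_eq_intros d\<theta> refl)+ (simp add: algebra_simps)
  have r_nz: "r t \<noteq> 0" using r by simp
  show ?thesis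
    apply (rule derivative_eq_intros dr dp\<theta> dpr dE dF r_nz refl)+
    using r by (simp_all add: field_simps power2_eq_square power3_eq_cube s3)
qed

lemma Jint_conserved_at:
  fixes k1 k2 k3 :: real
  assumes ab: "angle_branch U th" and inU: "(x t, y t) \<in> U"
    and x: "(x has_real_derivative x' t) (at t)" and y: "(y has_real_derivative y' t) (at t)"
    and x': "(x' has_real_derivative x'' t) (at t)" and y': "(y' has_real_derivative y'' t) (at t)"
    and newton: "(Vpot k1 k2 k3 th has_derivative (\<lambda>(h1, h2). - (x'' t * h1 + y'' t * h2))) (at (x t, y t))"
  shows "((\<lambda>s. Jint k1 k2 k3 th (x s) (y s) (x' s) (y' s)) has_real_derivative 0) (at t)"
proof -
  have nz: "(x t, y t) \<noteq> (0, 0)" using ab inU unfolding angle_branch_def by auto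
  define r where "r s = rad (x s) (y s)" for s
  define \<theta> where "\<theta> s = th (x s, y s)" for s
  define p\<^sub>\<theta> where "p\<^sub>\<theta> s = x s * y' s - y s * x' s" for s
  define p\<^sub>r where "p\<^sub>r s = (x s * x' s + y s * y' s) / r s" for s
  define E where "E = k2 * exp (sqrt 3 * \<theta> t) + k3 * exp (- (sqrt 3 * \<theta> t))"
  define F where "F = k2 * exp (sqrt 3 * \<theta> t) - k3 * exp (- (sqrt 3 * \<theta> t))"
  have r: "r t > 0" using rad_pos[OF nz] unfolding r_def .
  have torque: "x t * y'' t - y t * x'' t = - sqrt 3 * F / r t ^ 3"
    and radial_force: "x t * x'' t + y t * y'' t = (2 * k1 + 3 * E / r t) / (r t)\<^sup>2"
    using Vpot_force_polar[OF ab inU newton] unfolding E_def F_def \<theta>_def r_def by auto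
  have "(r has_real_derivative p\<^sub>r t) (at t)"
    using rad_along_curve_has_derivative[OF nz x y] unfolding p\<^sub>r_def r_def .
  moreover have "(\<theta> has_real_derivative p\<^sub>\<theta> t / (r t)\<^sup>2) (at t)"
    using has_derivative_along_curve[OF angle_branch_has_derivative[OF ab inU] x y]
    unfolding p\<^sub>\<theta>_def r_def \<theta>_def by simp
  moreover have "(p\<^sub>\<theta> has_real_derivative - sqrt 3 * F / r t ^ 3) (at t)"
    unfolding p\<^sub>\<theta>_def torque[symmetric] by (rule derivative_eq_intros x y x' y' refl | simp)+
  moreover have "(p\<^sub>r has_real_derivative ((p\<^sub>\<theta> t)\<^sup>2 + 2 * k1 + 3 * E / r t) / r t ^ 3) (at t)"
  proof -
    have "((p\<^sub>\<theta> t)\<^sup>2 / (r t)\<^sup>2 + (x t * x'' t + y t * y'' t)) / r t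
          = ((p\<^sub>\<theta> t)\<^sup>2 + 2 * k1 + 3 * E / r t) / r t ^ 3"
      using r unfolding radial_force by (simp add: field_simps power2_eq_square power3_eq_cube)
    with radial_momentum_has_derivative[where x'' = x'' and y'' = y'', OF nz x y x' y'] show ?thesis
      unfolding p\<^sub>r_def p\<^sub>\<theta>_def r_def by (simp add: add.assoc)
  qed
  ultimately have "((\<lambda>s. p\<^sub>\<theta> s ^ 3
        + 3/4 * (2 * k1 + 3 / r s * (k2 * exp (sqrt 3 * \<theta> s) + k3 * exp (- (sqrt 3 * \<theta> s)))) * p\<^sub>\<theta> s
        + 3 * sqrt 3 / 4 * (k2 * exp (sqrt 3 * \<theta> s) - k3 * exp (- (sqrt 3 * \<theta> s))) * p\<^sub>r s)
      has_real_derivative 0) (at t)"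
    using polar_first_integral[where r = r and \<theta> = \<theta> and p\<^sub>\<theta> = p\<^sub>\<theta> and p\<^sub>r = p\<^sub>r, OF r]
    unfolding E_def F_def by blast
  then show ?thesis
    unfolding Jint_def Let_def p\<^sub>\<theta>_def p\<^sub>r_def r_def \<theta>_def .
qed

theorem mainTheorem6:
  fixes k1 k2 k3 :: real
    and U :: "(real \<times> real) set" and th :: "real \<times> real \<Rightarrow> real"
    and I :: "real set" and x y x' y' x'' y'' :: "real \<Rightarrow> real"
  assumes "angle_branch U th"
    and "open I"
    and "\<forall>t\<in>I. (x t, y t) \<in> U"
    and "\<forall>t\<in>I. (x has_real_derivative x' t) (at t) \<and> (y has_real_derivative y' t) (at t)"
    and "\<forall>t\<in>I. (x' has_real_derivative x'' t) (at t) \<and> (y' has_real_derivative y'' t) (at t)"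
    and "\<forall>t\<in>I. (Vpot k1 k2 k3 th has_derivative
                 (\<lambda>(h1, h2). - (x'' t * h1 + y'' t * h2))) (at (x t, y t))"
  shows "\<forall>t\<in>I. ((\<lambda>s. Jint k1 k2 k3 th (x s) (y s) (x' s) (y' s)) has_real_derivative 0) (at t)"
  using Jint_conserved_at[OF assms(1)] assms(3-6) by blast

end
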